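(* Let $q$ be a prime power, $t\ge1$, $F=\mathbb{F}_{q^t}$, $B=\mathbb{F}_q$, and let $A=F$, so $n=|F|=q^t$. Suppose $r=n-k=q^s$ for some $s\in\{1,\dots,t\}$. Then any linear repair scheme over $B$ for a single erased symbol of the Reed-Solomon code $\mathrm{RS}(A,k)$ over $F$ requires a bandwidth of at least $(n-1)(t-s)$ sub-symbols over $B$.
   Context: $\mathrm{RS}(A,k)=\{(f(\alpha))_{\alpha\in A} : f\in F[x],\ \deg f<k\}$, with the symbol $f(\alpha)$ stored at node $\alpha$. A linear repair scheme over $B$ for the erased symbol $f(\alpha^* )$ is one in which each node $\alpha\neq\alpha^*$ sends $b_\alpha$ $B$-linear functions (sub-symbols over $B$) of its stored symbol, from which $f(\alpha^* )$ is recovered $B$-linearly; its bandwidth is $\sum_{\alpha\ne\alpha^*} b_\alpha$ sub-symbols. Equivalently, it corresponds to $t$ polynomials $g_1,\dots,g_t\in F[x]$ of degree at most $r-1$ with $\mathrm{rank}_B\{g_i(\alpha^* )\}_{i}=t$, the bandwidth being $\sum_{\alpha\neq\alpha^*}\mathrm{rank}_B\{g_i(\alpha)\}_i$. *)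

theory Defs
  imports "HOL-Computational_Algebra.Polynomial" "HOL-Computational_Algebra.Primes"
begin

definition prime_power :: "nat \<Rightarrow> bool" where
  "prime_power q \<longleftrightarrow> (\<exists>p m. prime p \<and> m \<ge> 1 \<and> q = p ^ m)"

definition subfield :: "'a::field set \<Rightarrow> bool" where
  "subfield B \<longleftrightarrow> 0 \<in> B \<and> 1 \<in> B \<and>
     (\<forall>x\<in>B. \<forall>y\<in>B. x + y \<in> B \<and> x * y \<in> B) \<and>
     (\<forall>x\<in>B. - x \<in> B) \<and> (\<forall>x\<in>B. x \<noteq> 0 \<longrightarrow> inverse x \<in> B)"

text \<open>A B-linear function F \<rightarrow> B (a sub-symbol over B of a stored symbol).\<close>
definition B_functional :: "'a::field set \<Rightarrow> ('a \<Rightarrow> 'a) \<Rightarrow> bool" where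
  "B_functional B l \<longleftrightarrow> (\<forall>x y. l (x + y) = l x + l y) \<and>
     (\<forall>c\<in>B. \<forall>x. l (c * x) = c * l x) \<and> (\<forall>x. l x \<in> B)"

text \<open>Codewords of RS(A,k): evaluations of polynomials f with deg f < k
  (the zero polynomial always included).\<close>
definition RS_poly :: "nat \<Rightarrow> 'a::field poly \<Rightarrow> bool" where
  "RS_poly k f \<longleftrightarrow> f = 0 \<or> degree f < k"

text \<open>Linear repair scheme over B for node a0 of RS(A,k): node a \<noteq> a0 sends the
  sub-symbols (Q a ! j) (f a), j < length (Q a), each a B-linear function of its
  stored symbol; f(a0) is recovered as a B-linear function of all received
  sub-symbols, i.e. as a B-linear combination with coefficients W a ! j \<in> F
  (every B-linear map B^N \<rightarrow> F has this form).\<close>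
definition linear_repair_scheme ::
  "'a::field set \<Rightarrow> 'a set \<Rightarrow> nat \<Rightarrow> 'a \<Rightarrow> ('a \<Rightarrow> ('a \<Rightarrow> 'a) list) \<Rightarrow> ('a \<Rightarrow> 'a list) \<Rightarrow> bool" where
  "linear_repair_scheme B A k a0 Q W \<longleftrightarrow> a0 \<in> A \<and>
     (\<forall>a\<in>A - {a0}. (\<forall>l\<in>set (Q a). B_functional B l) \<and> length (W a) = length (Q a)) \<and>
     (\<forall>f. RS_poly k f \<longrightarrow>
        poly f a0 = (\<Sum>a\<in>A - {a0}. \<Sum>j<length (Q a). W a ! j * (Q a ! j) (poly f a)))"

definition bandwidth :: "'a set \<Rightarrow> 'a \<Rightarrow> ('a \<Rightarrow> ('a \<Rightarrow> 'a) list) \<Rightarrow> nat" where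
  "bandwidth A a0 Q = (\<Sum>a\<in>A - {a0}. length (Q a))"

end

theory Submission
  imports Defs Complex_Main
begin

text \<open>
  The trace \<open>tr : F \<rightarrow> B\<close> is a nonzero \<open>B\<close>-linear functional. For a node \<open>a\<close> sending the
  sub-symbols given by weights \<open>w\<^sub>1, \<dots>, w\<^sub>b\<^sub>a\<close>, the set \<open>K\<^sub>a = {c. \<forall>j. tr (c w\<^sub>j) = 0}\<close> is a
  \<open>B\<close>-subspace of \<open>F\<close> of codimension at most \<open>b\<^sub>a\<close>, so \<open>|K\<^sub>a| \<ge> q\<^sup>t\<^sup>-\<^sup>b\<^sup>a\<close>. A nonzero \<open>c\<close>
  lies in fewer than \<open>r\<close> of the \<open>K\<^sub>a\<close>: otherwise the polynomial of degree \<open>< k\<close> vanishing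
  at all other nodes could be scaled so that \<open>tr (c f(a\<^sub>0)) \<noteq> 0\<close>, while the repair
  equation expresses \<open>tr (c f(a\<^sub>0))\<close> as a combination of the values \<open>tr (c w\<^sub>j)\<close> at nodes
  with \<open>c \<in> K\<^sub>a\<close>. Double counting gives \<open>\<Sum>\<^sub>a q\<^sup>t\<^sup>-\<^sup>b\<^sup>a \<le> (n - 1) q\<^sup>s\<close>, and convexity of
  \<open>x \<mapsto> q\<^sup>x\<close> turns this into \<open>\<Sum>\<^sub>a b\<^sub>a \<ge> (n - 1)(t - s)\<close>.
\<close>

lemma subfield_diff:
  assumes "subfield B" "x \<in> B" "y \<in> B"
  shows "x - y \<in> B"
  using assms unfolding subfield_def by (metis diff_conv_add_uminus)

lemma of_nat_card_subfield:
  fixes B :: "'a :: field set"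
  assumes "subfield B" "finite B"
  shows "of_nat (card B) = (0 :: 'a)"
proof -
  have "(\<Sum>y\<in>B. 1 + y) = (\<Sum>y\<in>B. y)"
    by (rule sum.reindex_bij_witness[of _ "\<lambda>y. y - 1" "\<lambda>y. 1 + y"])
       (use assms subfield_diff[OF assms(1)] in \<open>auto simp: subfield_def\<close>)
  then show ?thesis
    by (simp add: sum.distrib)
qed

lemma power_card_subfield:
  fixes x :: "'a :: field"
  assumes "subfield B" "finite B" "x \<in> B"
  shows "x ^ card B = x"
proof (cases "x = 0")
  case True
  then show ?thesis
    using assms by (auto simp: card_gt_0_iff)
next
  case False
  have card_B: "card B = Suc (card (B - {0}))"
    using assms by (metis card_Suc_Diff1 subfield_def)
  have "(\<Prod>y\<in>B-{0}. x * y) = (\<Prod>y\<in>B-{0}. y)"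
    by (rule prod.reindex_bij_witness[of _ "\<lambda>y. inverse x * y" "\<lambda>y. x * y"])
       (use assms False in \<open>auto simp: subfield_def\<close>)
  moreover have "(\<Prod>y\<in>B-{0}. y) \<noteq> 0"
    using assms by simp
  ultimately have "x ^ card (B - {0}) = 1"
    by (simp add: prod.distrib)
  then show ?thesis
    using card_B by simp
qed

lemma power_card_subfield_eq_imp_mem:
  fixes z :: "'a :: field"
  assumes "subfield B" "finite B" "z ^ card B = z"
  shows "z \<in> B"
proof -
  define q where "q = card B"
  have "{0, 1} \<subseteq> B"
    using assms(1) by (simp add: subfield_def)
  then have "card {0, 1 :: 'a} \<le> q"
    unfolding q_def using assms(2) by (rule card_mono[rotated])
  then have "2 \<le> q"
    by simp
  define P :: "'a poly" where "P = monom 1 q - monom 1 1"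
  have poly_P: "poly P x = x ^ q - x" for x
    by (simp add: P_def poly_monom)
  have "coeff P q = 1"
    using \<open>2 \<le> q\<close> by (simp add: P_def)
  then have "P \<noteq> 0"
    by auto
  have "degree P \<le> q"
    unfolding P_def
    by (rule degree_diff_le) (use \<open>2 \<le> q\<close> in \<open>auto intro: order.trans[OF degree_monom_le]\<close>)
  then have "card {x. poly P x = 0} \<le> card B"
    using card_poly_roots_bound[OF \<open>P \<noteq> 0\<close>] q_def by linarith
  moreover have "B \<subseteq> {x. poly P x = 0}"
    using power_card_subfield[OF assms(1,2)] by (auto simp: poly_P q_def)
  ultimately have "B = {x. poly P x = 0}"
    using poly_roots_finite[OF \<open>P \<noteq> 0\<close>] by (metis card_seteq)
  moreover have "z \<in> {x. poly P x = 0}"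
    using assms(3) by (simp add: poly_P q_def)
  ultimately show ?thesis
    by blast
qed

lemma prime_power_ge_2:
  assumes "prime_power q"
  shows "2 \<le> q"
proof -
  obtain p m where p: "prime p" and m: "m \<ge> 1" and "q = p ^ m"
    using assms by (auto simp: prime_power_def)
  then have "p ^ 1 \<le> q"
    using power_increasing[OF m prime_ge_1_nat[OF p]] by simp
  then show ?thesis
    using prime_ge_2_nat[OF p] by simp
qed

lemma card_subfield_eq_CHAR_power:
  fixes B :: "'a :: field set"
  assumes "subfield B" "finite B" "prime_power (card B)"
  obtains m where "prime CHAR('a)" "card B = CHAR('a) ^ m"
proof -
  obtain p m where pm: "prime p" "m \<ge> 1" "card B = p ^ m"
    using assms(3) by (auto simp: prime_power_def)
  have "of_nat (p ^ m) = (0 :: 'a)"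
    using of_nat_card_subfield[OF assms(1,2)] pm(3) by simp
  then have "CHAR('a) dvd p ^ m"
    by (simp only: of_nat_eq_0_iff_char_dvd)
  moreover have "CHAR('a) > 0"
    using calculation pm(1) by (metis gr0I dvd_0_left_iff power_not_zero not_prime_0)
  then have "prime CHAR('a)"
    by (rule prime_CHAR_semidom)
  ultimately have "CHAR('a) = p"
    using pm(1) by (metis prime_dvd_power primes_dvd_imp_eq)
  then show ?thesis
    using that \<open>prime CHAR('a)\<close> pm(3) by blast
qed

lemma B_functional_zero: "B_functional B l \<Longrightarrow> l 0 = 0"
  unfolding B_functional_def by (metis add_0_right add_left_imp_eq)

lemma B_functional_diff: "B_functional B l \<Longrightarrow> l (x - y) = l x - l y"
  unfolding B_functional_def by (metis add_diff_cancel diff_add_cancel)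

lemma B_functional_sum:
  assumes "B_functional B l"
  shows "l (sum f A) = (\<Sum>a\<in>A. l (f a))"
proof (induction A rule: infinite_finite_induct)
  case (insert a A)
  then show ?case
    using assms by (simp add: B_functional_def)
qed (simp_all add: B_functional_zero[OF assms])

lemma subfield_UNIV: "subfield (UNIV :: 'a :: field set)"
  by (simp add: subfield_def)

definition field_trace :: "nat \<Rightarrow> nat \<Rightarrow> 'a :: field \<Rightarrow> 'a" where
  "field_trace q t y = (\<Sum>i<t. y ^ (q ^ i))"

lemma B_functional_field_trace:
  fixes B :: "'a :: {field, finite} set"
  assumes B: "subfield B" "card B = q" "prime_power q" and card_UNIV: "card (UNIV :: 'a set) = q ^ t"
  shows "B_functional B (field_trace q t)"
proof -
  obtain m where CHAR: "prime CHAR('a)" "q = CHAR('a) ^ m"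
    using card_subfield_eq_CHAR_power[of B] B by auto
  have frob_add: "(x + y) ^ (q ^ i) = x ^ (q ^ i) + y ^ (q ^ i)" for x y :: 'a and i
    by (rule freshmans_dream'[where n = "m * i"]) (use CHAR in \<open>simp_all add: power_mult\<close>)
  have frob_sum: "sum f A ^ (q ^ i) = (\<Sum>a\<in>A. f a ^ (q ^ i))" for f :: "nat \<Rightarrow> 'a" and A i
    by (rule freshmans_dream_sum'[where n = "m * i"]) (use CHAR in \<open>simp_all add: power_mult\<close>)
  have power_fixed: "c ^ (q ^ i) = c" if "c \<in> B" for c i
  proof (induction i)
    case (Suc i)
    then show ?case
      using power_card_subfield[OF B(1) _ that] B(2) by (simp add: power_mult mult.commute)
  qed simp
  have "field_trace q t (x + y) = field_trace q t x + field_trace q t y" for x y :: 'a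
    unfolding field_trace_def by (simp only: frob_add sum.distrib)
  moreover have "field_trace q t (c * x) = c * field_trace q t x" if "c \<in> B" for c x
    unfolding field_trace_def using power_fixed[OF that]
    by (simp add: power_mult_distrib sum_distrib_left)
  moreover have "field_trace q t y \<in> B" for y :: 'a
  proof -
    have y: "y ^ (q ^ t) = y"
      using power_card_subfield[OF subfield_UNIV, of y] card_UNIV by simp
    have "field_trace q t y ^ q = (\<Sum>i<t. y ^ (q ^ Suc i))"
      using frob_sum[of "\<lambda>i. y ^ (q ^ i)" "{..<t}" 1] unfolding field_trace_def
      by (simp add: power_mult[symmetric] mult.commute)
    also have "\<dots> = field_trace q t y"
    proof (cases t)
      case (Suc t')
      have "(\<Sum>i<Suc t'. y ^ (q ^ Suc i)) = y ^ (q ^ 0) + (\<Sum>i<t'. y ^ (q ^ Suc i))"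
        using y Suc by (simp only: sum.lessThan_Suc) simp
      then show ?thesis
        unfolding field_trace_def Suc by (simp only: sum.lessThan_Suc_shift)
    qed (simp add: field_trace_def)
    finally show ?thesis
      using power_card_subfield_eq_imp_mem[OF B(1) finite] B(2) by simp
  qed
  ultimately show ?thesis
    unfolding B_functional_def by blast
qed

lemma field_trace_not_identically_zero:
  assumes "1 < q" "1 \<le> t" "card (UNIV :: 'a :: {field, finite} set) = q ^ t"
  shows "\<exists>y :: 'a. field_trace q t y \<noteq> 0"
proof -
  define P :: "'a poly" where "P = (\<Sum>i<t. monom 1 (q ^ i))"
  have poly_P: "poly P x = field_trace q t x" for x
    by (simp add: P_def field_trace_def poly_sum poly_monom)
  have "coeff P (q ^ (t - 1)) = (\<Sum>i<t. if i = t - 1 then 1 else 0)"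
    unfolding P_def coeff_sum using assms(1) by (intro sum.cong) (auto simp: coeff_monom)
  also have "\<dots> = 1"
    using assms(2) by simp
  finally have "P \<noteq> 0"
    by auto
  have "degree P \<le> q ^ (t - 1)"
    unfolding P_def
  proof (rule degree_sum_le)
    fix i assume "i \<in> {..<t}"
    then have "q ^ i \<le> q ^ (t - 1)"
      using assms(1) by (intro power_increasing) auto
    then show "degree (monom (1 :: 'a) (q ^ i)) \<le> q ^ (t - 1)"
      using degree_monom_le order.trans by blast
  qed simp
  moreover have "q ^ (t - 1) < q ^ t"
    using assms(1,2) by (intro power_strict_increasing) auto
  ultimately have "card {x. poly P x = 0} < card (UNIV :: 'a set)"
    using card_poly_roots_bound[OF \<open>P \<noteq> 0\<close>] assms(3) by linarith
  then have "{x. poly P x = 0} \<noteq> UNIV"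
    by auto
  then show ?thesis
    using poly_P by auto
qed

lemma card_UNIV_le_card_annihilator:
  fixes l :: "'a :: {field, finite} \<Rightarrow> 'a"
  assumes "B_functional B l"
  shows "card (UNIV :: 'a set) \<le> card B ^ length ws * card {c. \<forall>w\<in>set ws. l (c * w) = 0}"
proof -
  define K where "K = {c. \<forall>w\<in>set ws. l (c * w) = 0}"
  define L where "L = {vs. set vs \<subseteq> B \<and> length vs = length ws}"
  define h where "h c = map (\<lambda>w. l (c * w)) ws" for c
  define rep where "rep v = (SOME c. h c = v)" for v
  have h_rep: "h (rep (h c)) = h c" for c
    unfolding rep_def by (rule someI_ex) blast
  \<comment> \<open>The fibres of the \<open>B\<close>-linear map \<open>h\<close> are translates of \<open>K\<close>.\<close>
  have "inj (\<lambda>c. (h c, c - rep (h c)))"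
    by (rule injI) auto
  moreover have "(h c, c - rep (h c)) \<in> L \<times> K" for c
  proof -
    have "h c \<in> L"
      using assms unfolding L_def h_def B_functional_def by auto
    moreover have "l ((c - rep (h c)) * w) = 0" if "w \<in> set ws" for w
    proof -
      have "l (rep (h c) * w) = l (c * w)"
        using h_rep that by (auto simp: h_def)
      then show ?thesis
        using B_functional_diff[OF assms] by (simp add: left_diff_distrib)
    qed
    ultimately show ?thesis
      unfolding K_def by simp
  qed
  moreover have "finite (L \<times> K)"
    unfolding L_def using finite_lists_length_eq[of B] by simp
  ultimately have "card (UNIV :: 'a set) \<le> card (L \<times> K)"
    by (intro card_inj_on_le[of _ UNIV]) auto
  also have "\<dots> = card B ^ length ws * card K"
    unfolding L_def by (simp add: card_cartesian_product card_lists_length_eq)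
  finally show ?thesis
    unfolding K_def .
qed

text \<open>
  If \<open>n - k\<close> nodes had \<open>c\<close> in their annihilators, a polynomial of degree \<open>< k\<close> vanishing on all
  other nodes would make the right-hand side of the repair equation, multiplied by \<open>c\<close> and
  mapped by \<open>l\<close>, vanish term by term, although its value \<open>l (c f(a\<^sub>0))\<close> can be arranged to be
  nonzero.
\<close>
lemma repair_scheme_card_annihilating_nodes_less:
  fixes B :: "'a :: {field, finite} set" and l :: "'a \<Rightarrow> 'a"
  assumes scheme: "linear_repair_scheme B UNIV k a0 Q W"
    and l: "B_functional B l" "l y \<noteq> 0" and "c \<noteq> 0" and "k < card (UNIV :: 'a set)"
  shows "card {a \<in> UNIV - {a0}. \<forall>w\<in>set (W a). l (c * w) = 0} < card (UNIV :: 'a set) - k"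
proof (rule ccontr)
  define U where "U = UNIV - {a0}"
  define Z where "Z = {a \<in> U. \<forall>w\<in>set (W a). l (c * w) = 0}"
  define R where "R = U - Z"
  assume "\<not> ?thesis"
  then have "card (UNIV :: 'a set) - k \<le> card Z"
    unfolding Z_def U_def by simp
  moreover have "card U = card (UNIV :: 'a set) - 1" "Z \<subseteq> U"
    unfolding U_def Z_def by (auto simp: card_Diff_singleton)
  ultimately have "card R < k"
    unfolding R_def using assms(5) card_mono[of U Z] by (simp add: card_Diff_subset)
  define f where "f = smult (y / (c * (\<Prod>a\<in>R. a0 - a))) (\<Prod>a\<in>R. [:- a, 1:])"
  have poly_f: "poly f x = y / (c * (\<Prod>a\<in>R. a0 - a)) * (\<Prod>a\<in>R. x - a)" for x
    unfolding f_def by (simp add: poly_prod)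
  have "degree f \<le> card R"
    unfolding f_def using degree_prod_sum_le[of R "\<lambda>a. [:- a, 1:]"] by simp
  then have "RS_poly k f"
    unfolding RS_poly_def using \<open>card R < k\<close> by simp
  then have repair: "poly f a0 = (\<Sum>a\<in>U. \<Sum>j<length (Q a). W a ! j * (Q a ! j) (poly f a))"
    using scheme unfolding linear_repair_scheme_def U_def by blast
  have "(\<Prod>a\<in>R. a0 - a) \<noteq> 0"
    unfolding R_def U_def by auto
  then have "y = c * poly f a0"
    using \<open>c \<noteq> 0\<close> by (simp add: poly_f)
  also have "\<dots> = (\<Sum>a\<in>U. \<Sum>j<length (Q a). (Q a ! j) (poly f a) * (c * W a ! j))"
    unfolding repair by (simp add: sum_distrib_left algebra_simps)
  finally have "l y = (\<Sum>a\<in>U. \<Sum>j<length (Q a). (Q a ! j) (poly f a) * l (c * W a ! j))"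
  proof (simp add: B_functional_sum[OF l(1)], intro sum.cong refl)
    fix a j assume "a \<in> U" "j \<in> {..<length (Q a)}"
    then have "(Q a ! j) (poly f a) \<in> B"
      using scheme unfolding linear_repair_scheme_def U_def B_functional_def by auto
    then show "l ((Q a ! j) (poly f a) * (c * W a ! j)) = (Q a ! j) (poly f a) * l (c * W a ! j)"
      using l(1) unfolding B_functional_def by blast
  qed
  also have "\<dots> = 0"
  proof (intro sum.neutral ballI)
    fix a j assume a: "a \<in> U" and j: "j \<in> {..<length (Q a)}"
    show "(Q a ! j) (poly f a) * l (c * W a ! j) = 0"
    proof (cases "a \<in> Z")
      case True
      have "length (W a) = length (Q a)"
        using scheme a unfolding linear_repair_scheme_def U_def by blast
      then show ?thesis
        using True j unfolding Z_def by auto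
    next
      case False
      then have "poly f a = 0"
        using a unfolding poly_f R_def by (auto simp: prod_zero_iff)
      moreover have "B_functional B (Q a ! j)"
        using scheme a j unfolding linear_repair_scheme_def U_def by auto
      ultimately show ?thesis
        by (simp add: B_functional_zero)
    qed
  qed
  finally show False
    using l(2) by simp
qed

lemma sum_card_le_card_mult_incidence_bound:
  fixes K :: "'i \<Rightarrow> 'b set"
  assumes "finite U" "finite X" "\<And>a. a \<in> U \<Longrightarrow> K a \<subseteq> X"
    and "\<And>c. c \<in> X \<Longrightarrow> card {a \<in> U. c \<in> K a} \<le> m"
  shows "(\<Sum>a\<in>U. card (K a)) \<le> card X * m"
proof -
  have "\<forall>a\<in>U. finite (K a)"
    using assms(2,3) finite_subset by blast
  then have "(\<Sum>a\<in>U. card (K a)) = card (SIGMA a:U. K a)"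
    by (simp only: card_SigmaI[OF assms(1)])
  also have "(SIGMA a:U. K a) = prod.swap ` (SIGMA c:X. {a \<in> U. c \<in> K a})"
    using assms(3) by force
  also have "card \<dots> = (\<Sum>c\<in>X. card {a \<in> U. c \<in> K a})"
    using assms(1,2) by (simp add: card_image)
  also have "\<dots> \<le> card X * m"
    using sum_mono[of X _ "\<lambda>_. m"] assms(4) by simp
  finally show ?thesis .
qed

lemma sum_nonpos_if_sum_powr_le_card:
  fixes x :: "'i \<Rightarrow> real"
  assumes "1 < b" "(\<Sum>a\<in>U. b powr x a) \<le> card U"
  shows "(\<Sum>a\<in>U. x a) \<le> 0"
proof -
  have "1 + x a * ln b \<le> b powr x a" for a
    using exp_ge_add_one_self[of "x a * ln b"] assms(1) by (simp add: powr_def)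
  then have "card U + ln b * (\<Sum>a\<in>U. x a) \<le> (\<Sum>a\<in>U. b powr x a)"
    using sum_mono[of U "\<lambda>a. 1 + x a * ln b"]
    by (simp add: sum.distrib sum_distrib_left mult.commute)
  then have "ln b * (\<Sum>a\<in>U. x a) \<le> 0"
    using assms(2) by linarith
  then show ?thesis
    using assms(1) by (simp add: mult_le_0_iff)
qed

lemma card_mult_diff_le_sum_exponents:
  fixes q :: nat and b m :: "'i \<Rightarrow> nat"
  assumes "1 < q" and bound: "\<And>a. a \<in> U \<Longrightarrow> q ^ t \<le> q ^ b a * m a"
    and sum_m: "(\<Sum>a\<in>U. m a) \<le> card U * q ^ s"
  shows "card U * (t - s) \<le> (\<Sum>a\<in>U. b a)"
proof (cases "s \<le> t")
  case True
  define x where "x a = real t - real s - real (b a)" for a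
  have "real q powr x a \<le> m a / real q ^ s" if "a \<in> U" for a
  proof -
    have "real q powr x a = real q ^ t / (real q ^ s * real q ^ b a)"
      using assms(1) by (simp add: x_def powr_diff powr_realpow)
    also have "\<dots> \<le> real q ^ b a * m a / (real q ^ s * real q ^ b a)"
      using bound[OF that] by (intro divide_right_mono) (metis of_nat_le_iff of_nat_mult of_nat_power, simp)
    also have "\<dots> = m a / real q ^ s"
      using assms(1) by simp
    finally show ?thesis .
  qed
  then have "(\<Sum>a\<in>U. real q powr x a) \<le> (\<Sum>a\<in>U. m a / real q ^ s)"
    by (rule sum_mono)
  also have "\<dots> = (\<Sum>a\<in>U. m a) / real q ^ s"
    by (simp add: sum_divide_distrib)
  also have "\<dots> \<le> card U"
    using of_nat_mono[OF sum_m] assms(1) by (simp add: divide_le_eq)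
  finally have "(\<Sum>a\<in>U. x a) \<le> 0"
    using assms(1) by (intro sum_nonpos_if_sum_powr_le_card) simp_all
  then have "real (card U) * (real t - real s) \<le> (\<Sum>a\<in>U. real (b a))"
    by (simp add: x_def sum_subtractf)
  then show ?thesis
    using True by (simp flip: of_nat_sum of_nat_diff of_nat_mult)
qed simp

theorem corollary1:
  fixes B :: "'a::{field,finite} set" and q t s k :: nat and a0 :: 'a
    and Q :: "'a \<Rightarrow> ('a \<Rightarrow> 'a) list" and W :: "'a \<Rightarrow> 'a list"
  assumes "prime_power q" and "t \<ge> 1"
    and "subfield B" and "card B = q" and "card (UNIV :: 'a set) = q ^ t"
    and "s \<in> {1..t}" and "card (UNIV :: 'a set) - k = q ^ s"
    and "linear_repair_scheme B (UNIV :: 'a set) k a0 Q W"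
  shows "bandwidth (UNIV :: 'a set) a0 Q \<ge> (card (UNIV :: 'a set) - 1) * (t - s)"
proof -
  define n where "n = card (UNIV :: 'a set)"
  define U where "U = UNIV - {a0}"
  define l :: "'a \<Rightarrow> 'a" where "l = field_trace q t"
  define K where "K a = {c. \<forall>w\<in>set (W a). l (c * w) = 0}" for a
  have "1 < q"
    using prime_power_ge_2[OF assms(1)] by simp
  have l: "B_functional B l"
    unfolding l_def using B_functional_field_trace assms(1,3-5) by blast
  obtain y where "l y \<noteq> 0"
    unfolding l_def using field_trace_not_identically_zero \<open>1 < q\<close> assms(2,5) by blast
  have "k < n"
    using assms(7) zero_less_power[of q s] \<open>1 < q\<close> unfolding n_def by linarith
  have card_U: "card U = n - 1" "card (UNIV - {0 :: 'a}) = n - 1"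
    unfolding U_def n_def by (simp_all add: card_Diff_singleton)
  have annihilators_large: "q ^ t \<le> q ^ length (Q a) * card (K a)" if "a \<in> U" for a
    using card_UNIV_le_card_annihilator[OF l, of "W a"] assms(4,5,8) that
    unfolding K_def U_def linear_repair_scheme_def by simp
  have "card {a \<in> U. c \<in> K a - {0}} \<le> q ^ s - 1" if "c \<in> UNIV - {0}" for c
    using repair_scheme_card_annihilating_nodes_less[OF assms(8) l \<open>l y \<noteq> 0\<close>, of c]
      that assms(7) \<open>k < n\<close> unfolding K_def U_def n_def by simp
  then have "(\<Sum>a\<in>U. card (K a - {0})) \<le> card (UNIV - {0 :: 'a}) * (q ^ s - 1)"
    by (intro sum_card_le_card_mult_incidence_bound) auto
  moreover have "card (K a) = card (K a - {0}) + 1" for a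
    using card_Suc_Diff1[of "K a" 0] B_functional_zero[OF l] by (simp add: K_def)
  ultimately have "(\<Sum>a\<in>U. card (K a)) \<le> card U * (q ^ s - 1) + card U"
    using card_U by (simp add: sum_Suc)
  also have "\<dots> = card U * q ^ s"
    using \<open>1 < q\<close> by (simp add: diff_mult_distrib2)
  finally have "(\<Sum>a\<in>U. card (K a)) \<le> card U * q ^ s" .
  with annihilators_large have "card U * (t - s) \<le> (\<Sum>a\<in>U. length (Q a))"
    by (rule card_mult_diff_le_sum_exponents[OF \<open>1 < q\<close>])
  then show ?thesis
    unfolding bandwidth_def U_def by (simp add: card_Diff_singleton)
qed

end
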